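(* For all integers $a,b\ge1$, \[ 1+\frac{(2^a-1)(2^b-1)}{(2^{\gcd(a,b)}-1)\,2^{(a+b)/2}}>2^{(a+b)/2-\gcd(a,b)}. \] *)

theory Defs
  imports Complex_Main
begin

end

theory Submission
  imports Defs
begin

text \<open>Write \<open>x = 2 powr (a/2)\<close>, \<open>y = 2 powr (b/2)\<close> and \<open>H = 2\<^sup>g\<close> with \<open>g = gcd a b\<close>.
  Clearing denominators, the inequality becomes
  \<open>(x\<^sup>2 - H)(y\<^sup>2 - H) + H(H - 1)(xy - 1) > 0\<close>, which holds because \<open>g \<le> a\<close>,
  \<open>g \<le> b\<close> and \<open>g \<ge> 1\<close>; no finer property of the gcd is needed.\<close>

lemma mult_div_less_one_plus_div:
  fixes x y H :: real
  assumes "0 < x" "0 < y" "1 < H" "H \<le> x\<^sup>2" "H \<le> y\<^sup>2"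
  shows "x * y / H < 1 + (x\<^sup>2 - 1) * (y\<^sup>2 - 1) / ((H - 1) * (x * y))"
proof -
  have "1 < x\<^sup>2" "1 < y\<^sup>2" using assms by linarith+
  then have "1 < x" "1 < y"
    using assms(1,2) power2_less_imp_less[of 1 x] power2_less_imp_less[of 1 y] by simp_all
  then have "1 < x * y" by (simp add: less_1_mult)
  then have "0 < (x\<^sup>2 - H) * (y\<^sup>2 - H) + H * (H - 1) * (x * y - 1)"
    using assms by (intro add_nonneg_pos mult_nonneg_nonneg mult_pos_pos) auto
  then show ?thesis
    using assms by (simp add: field_simps power2_eq_square)
qed

lemma powr_half_power2:
  fixes c :: real
  assumes "0 < c"
  shows "(c powr (real n / 2))\<^sup>2 = c ^ n"
  using assms by (simp add: power2_eq_square flip: powr_add powr_realpow)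

theorem lemma3:
  fixes a b :: nat
  assumes "a \<ge> 1" and "b \<ge> 1"
  shows "1 + ((2::real) ^ a - 1) * (2 ^ b - 1) / ((2 ^ gcd a b - 1) * 2 powr (real (a + b) / 2))
         > 2 powr (real (a + b) / 2 - real (gcd a b))"
proof -
  define g where "g = gcd a b"
  define x where "x = (2::real) powr (real a / 2)"
  define y where "y = (2::real) powr (real b / 2)"
  have g: "1 \<le> g" "g \<le> a" "g \<le> b"
    using assms by (auto simp: g_def Suc_le_eq)
  have x2: "x\<^sup>2 = 2 ^ a" and y2: "y\<^sup>2 = 2 ^ b"
    by (simp_all add: x_def y_def powr_half_power2)
  have xy: "2 powr (real (a + b) / 2) = x * y"
    by (simp add: x_def y_def add_divide_distrib powr_add)
  have "x * y / 2 ^ g < 1 + (x\<^sup>2 - 1) * (y\<^sup>2 - 1) / ((2 ^ g - 1) * (x * y))"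
  proof (rule mult_div_less_one_plus_div)
    show "1 < (2::real) ^ g" using g by simp
    show "(2::real) ^ g \<le> x\<^sup>2" "(2::real) ^ g \<le> y\<^sup>2"
      using g by (simp_all add: x2 y2)
  qed (simp_all add: x_def y_def)
  then show ?thesis
    unfolding g_def[symmetric] powr_diff xy by (simp add: x2 y2 powr_realpow)
qed

end
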